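(* Let $1\le k\le d$ be integers. There exist $d+2$ mass assignments $\mu_0,\dots,\mu_{d+1}$ on the $k$-dimensional linear subspaces of $\mathbb{R}^d$ such that for no $k$-dimensional linear subspace $L$ of $\mathbb{R}^d$ is there a closed ball or closed half-space of $L$ containing exactly half of each of $\mu_0^L,\dots,\mu_{d+1}^L$.
   Context: A mass distribution on a $k$-dimensional space $L$ is a probability measure on $L$ absolutely continuous with respect to Lebesgue measure on $L$. A mass assignment on the $k$-dimensional linear subspaces of $\mathbb{R}^d$ is an assignment $L\mapsto \mu^L$ of a mass distribution $\mu^L$ on $L$ to every $k$-dimensional linear subspace $L$, depending continuously on $L$. *)

theory Defs
  imports "HOL-Probability.Probability"
begin

text \<open>Ambient space R^d is real^'n (d = CARD('n)); the dimension k is encoded by a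
finite type 'k (k = CARD('k)), so that R^k = real^'k.\<close>

definition k_subspace :: "'k::finite itself \<Rightarrow> (real^'n::finite) set \<Rightarrow> bool" where
  "k_subspace K L \<longleftrightarrow> subspace L \<and> dim L = CARD('k)"

text \<open>Lebesgue measure on a k-dimensional linear subspace L, viewed as a measure on the
ambient space: push-forward of Lebesgue measure on R^k under a linear isometry onto L
(independent of the choice by isometry invariance of Lebesgue measure).\<close>

definition lebesgue_on_subspace :: "'k::finite itself \<Rightarrow> (real^'n::finite) set \<Rightarrow> (real^'n) measure" where
  "lebesgue_on_subspace K L =
     distr (lborel :: (real^'k) measure) borel
       (SOME f :: real^'k \<Rightarrow> real^'n. linear f \<and> (\<forall>x. norm (f x) = norm x) \<and> range f = L)"

definition mass_distribution :: "'k::finite itself \<Rightarrow> (real^'n::finite) set \<Rightarrow> (real^'n) measure \<Rightarrow> bool" where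
  "mass_distribution K L M \<longleftrightarrow>
     sets M = sets borel \<and> prob_space M \<and> emeasure M (UNIV - L) = 0 \<and>
     absolutely_continuous (lebesgue_on_subspace K L) M"

text \<open>Convergence in the Grassmannian: orthogonal projections converge (pointwise,
equivalently in operator norm since the dimension is finite).\<close>

definition grass_tendsto :: "(nat \<Rightarrow> (real^'n::finite) set) \<Rightarrow> (real^'n) set \<Rightarrow> bool" where
  "grass_tendsto Ls L \<longleftrightarrow> (\<forall>x. (\<lambda>i. closest_point (Ls i) x) \<longlonglongrightarrow> closest_point L x)"

definition mass_assignment :: "'k::finite itself \<Rightarrow> ((real^'n::finite) set \<Rightarrow> (real^'n) measure) \<Rightarrow> bool" where
  "mass_assignment K \<mu> \<longleftrightarrow>
     (\<forall>L. k_subspace K L \<longrightarrow> mass_distribution K L (\<mu> L)) \<and>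
     (\<forall>Ls L. (\<forall>i. k_subspace K (Ls i)) \<and> k_subspace K L \<and> grass_tendsto Ls L \<longrightarrow>
        (\<forall>g :: real^'n \<Rightarrow> real. continuous_on UNIV g \<and> bounded (range g) \<longrightarrow>
           (\<lambda>i. integral\<^sup>L (\<mu> (Ls i)) g) \<longlonglongrightarrow> integral\<^sup>L (\<mu> L) g))"

definition closed_ball_of :: "(real^'n::finite) set \<Rightarrow> (real^'n) set \<Rightarrow> bool" where
  "closed_ball_of L H \<longleftrightarrow> (\<exists>c r. c \<in> L \<and> 0 < r \<and> H = cball c r \<inter> L)"

definition closed_halfspace_of :: "(real^'n::finite) set \<Rightarrow> (real^'n) set \<Rightarrow> bool" where
  "closed_halfspace_of L H \<longleftrightarrow> (\<exists>a b. a \<in> L \<and> a \<noteq> 0 \<and> H = {x \<in> L. a \<bullet> x \<le> b})"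

end

theory Submission
  imports Defs
begin

text \<open>Take the d + 2 points p_0 = 0, p_j = e_j (1 \<le> j \<le> d) and p_(d+1) = -(e_1 + ... + e_d),
  and let mu_i^L be the standard Gaussian on L centred at the orthogonal projection P p_i of p_i
  onto L. A Gaussian gives mass 1/2 to a half-space only if the boundary passes through its centre,
  and the mass it gives to a ball of fixed radius strictly decreases with the distance between the
  centres. So a half-space {x. a \<bullet> x \<le> b} bisecting every mu_i^L has a \<bullet> p_i = b for all i,
  forcing a = 0; and a ball with centre c bisecting all of them has |c - P p_i| = |c|, that is
  |P p_i|^2 = 2 c \<bullet> p_i, and summing over i = 1, ..., d + 1 gives \<Sum>|P p_i|^2 = 0, so P kills
  every e_j and L = 0. Continuity of L \<mapsto> mu_i^L comes from compactness of the linear isometries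
  R^k \<rightarrow> R^d together with the rotation invariance of the Gaussian.\<close>

section \<open>Lebesgue measure is invariant under linear isometries\<close>

lemma borel_measurable_linear:
  fixes f :: "'a::euclidean_space \<Rightarrow> 'b::euclidean_space"
  assumes "linear f"
  shows "f \<in> borel_measurable borel"
  using assms by (intro borel_measurable_continuous_onI linear_continuous_on)
    (simp add: linear_conv_bounded_linear)

lemma emeasure_lborel_ball_neq_0:
  fixes c :: "'a::euclidean_space"
  assumes "r > 0"
  shows "emeasure lborel (ball c r) \<noteq> 0"
  using assms by (simp add: emeasure_ball) (metis less_irrefl of_nat_0_le_iff unit_ball_vol_pos)

lemma nn_integral_lborel_translate:
  fixes t :: "'a::euclidean_space"
  assumes [measurable]: "f \<in> borel_measurable borel"
  shows "(\<integral>\<^sup>+x. f (t + x) \<partial>lborel) = (\<integral>\<^sup>+x. f x \<partial>lborel)"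
proof -
  have "(\<integral>\<^sup>+x. f x \<partial>lborel) = (\<integral>\<^sup>+x. f x \<partial>distr lborel borel ((+) t))"
    by (simp add: lborel_distr_plus)
  also have "\<dots> = (\<integral>\<^sup>+x. f (t + x) \<partial>lborel)"
    by (subst nn_integral_distr) auto
  finally show ?thesis ..
qed

lemma nn_integral_lborel_reflect:
  fixes t :: "'a::euclidean_space"
  assumes [measurable]: "f \<in> borel_measurable borel"
  shows "(\<integral>\<^sup>+x. f (t - x) \<partial>lborel) = (\<integral>\<^sup>+x. f x \<partial>lborel)"
proof -
  have "(\<integral>\<^sup>+x. f x \<partial>lborel) = (\<integral>\<^sup>+x. f x \<partial>distr lborel borel (\<lambda>x. t + (-1) *\<^sub>R x))"
    using lborel_affine[of "-1" t] by (simp add: density_1)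
  also have "\<dots> = (\<integral>\<^sup>+x. f (t - x) \<partial>lborel)"
    by (subst nn_integral_distr) auto
  finally show ?thesis ..
qed

lemma emeasure_distr_lborel_eq_nn_integral:
  fixes U :: "'a::euclidean_space \<Rightarrow> 'b::euclidean_space"
  assumes [measurable]: "U \<in> borel_measurable borel" "A \<in> sets borel"
  shows "emeasure (distr lborel borel U) A = (\<integral>\<^sup>+x. indicator A (U x) \<partial>lborel)"
proof -
  have "(\<integral>\<^sup>+x. indicator A (U x) \<partial>lborel) = (\<integral>\<^sup>+x. indicator A x \<partial>distr lborel borel U)"
    by (subst nn_integral_distr) auto
  then show ?thesis
    by simp
qed

text \<open>Fubini with the unit ball B, which U preserves: integrating the indicator of
  U x \<in> A, U x + y \<in> B in both orders gives (distr lborel borel U) A * \<lambda> B = \<lambda> A * \<lambda> B.\<close>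

lemma lborel_distr_linear_isometry:
  fixes U :: "'a::euclidean_space \<Rightarrow> 'a"
  assumes lin: "linear U" and isometry: "\<And>x. norm (U x) = norm x"
  shows "distr lborel borel U = lborel"
proof (rule measure_eqI)
  fix A :: "'a set"
  assume "A \<in> sets (distr lborel borel U)"
  then have [measurable]: "A \<in> sets borel"
    by simp
  have [measurable]: "U \<in> borel_measurable borel"
    using lin by (rule borel_measurable_linear)
  have "surj U"
    using lin isometry linear_injective_0 linear_injective_imp_surjective
    by (metis norm_eq_zero)
  define B :: "'a set" where "B = ball 0 1"
  have [measurable]: "B \<in> sets borel"
    by (simp add: B_def)
  have B_invariant: "indicator B (U x) = (indicator B x :: ennreal)" for x
    by (simp add: B_def indicator_def isometry)
  have B_pos: "emeasure lborel B \<noteq> 0"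
    by (simp add: B_def emeasure_lborel_ball_neq_0)
  have B_finite: "emeasure lborel B \<noteq> \<top>"
    by (simp add: B_def emeasure_ball)
  have ball_translate: "(\<integral>\<^sup>+y. indicator B (t + y) \<partial>lborel) = emeasure lborel B" for t
    by (subst nn_integral_lborel_translate) auto
  have A_reflect: "(\<integral>\<^sup>+y. indicator A (t - y) \<partial>lborel) = emeasure lborel A" for t
    by (subst nn_integral_lborel_reflect) auto
  have "emeasure (distr lborel borel U) A * emeasure lborel B
      = (\<integral>\<^sup>+x. (\<integral>\<^sup>+y. indicator A (U x) * indicator B (U x + y) \<partial>lborel) \<partial>lborel)"
    by (simp add: emeasure_distr_lborel_eq_nn_integral ball_translate nn_integral_multc nn_integral_cmult)
  also have "\<dots> = (\<integral>\<^sup>+y. (\<integral>\<^sup>+x. indicator A (U x) * indicator B (U x + y) \<partial>lborel) \<partial>lborel)"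
    by (rule lborel_pair.Fubini') measurable
  also have "\<dots> = (\<integral>\<^sup>+y. (\<integral>\<^sup>+x. indicator A (U x - y) * indicator B (U x) \<partial>lborel) \<partial>lborel)"
  proof (rule nn_integral_cong)
    fix y
    obtain z where z: "U z = - y"
      using \<open>surj U\<close> by (metis surjD)
    have "(\<integral>\<^sup>+x. indicator A (U x) * indicator B (U x + y) \<partial>lborel)
        = (\<integral>\<^sup>+x. indicator A (U (z + x)) * indicator B (U (z + x) + y) \<partial>lborel)"
      by (rule nn_integral_lborel_translate[symmetric]) measurable
    then show "(\<integral>\<^sup>+x. indicator A (U x) * indicator B (U x + y) \<partial>lborel)
        = (\<integral>\<^sup>+x. indicator A (U x - y) * indicator B (U x) \<partial>lborel)"
      by (simp add: linear_add[OF lin] z)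
  qed
  also have "\<dots> = (\<integral>\<^sup>+x. (\<integral>\<^sup>+y. indicator A (U x - y) * indicator B (U x) \<partial>lborel) \<partial>lborel)"
    by (rule lborel_pair.Fubini'[symmetric]) measurable
  also have "\<dots> = emeasure lborel A * emeasure lborel B"
    by (simp add: nn_integral_multc A_reflect B_invariant nn_integral_cmult)
  finally show "emeasure (distr lborel borel U) A = emeasure lborel A"
    using B_pos B_finite by (simp add: mult.commute[of _ "emeasure lborel B"] ennreal_mult_cancel_left)
qed simp

lemma not_AE_lborel_ball:
  fixes c :: "'a::euclidean_space"
  assumes "r > 0" and "\<And>y. y \<in> ball c r \<Longrightarrow> \<not> P y"
  shows "\<not> (AE y in lborel. P y)"
proof
  assume "AE y in lborel. P y"
  then have "AE y in lborel. y \<notin> ball c r"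
    by (rule eventually_mono) (use assms(2) in blast)
  then have "emeasure lborel (ball c r) = 0"
    by (subst (asm) AE_iff_measurable[of "ball c r"]) auto
  with emeasure_lborel_ball_neq_0[OF assms(1), of c] show False
    by simp
qed

lemma nn_integral_lborel_affine_isometry:
  fixes U :: "'a::euclidean_space \<Rightarrow> 'a"
  assumes "linear U" and "\<And>x. norm (U x) = norm x"
    and [measurable]: "f \<in> borel_measurable borel"
  shows "(\<integral>\<^sup>+y. f (t + U y) \<partial>lborel) = (\<integral>\<^sup>+y. f y \<partial>lborel)"
proof -
  have [measurable]: "U \<in> borel_measurable borel"
    using assms(1) by (rule borel_measurable_linear)
  have "(\<integral>\<^sup>+y. f (t + U y) \<partial>lborel) = (\<integral>\<^sup>+y. f (t + y) \<partial>distr lborel borel U)"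
    by (subst nn_integral_distr) auto
  also have "\<dots> = (\<integral>\<^sup>+y. f y \<partial>lborel)"
    using assms by (simp add: lborel_distr_linear_isometry nn_integral_lborel_translate)
  finally show ?thesis .
qed

section \<open>The standard Gaussian measure\<close>

definition std_gaussian_density :: "'a::euclidean_space \<Rightarrow> real" where
  "std_gaussian_density y = (\<Prod>b\<in>Basis. std_normal_density (y \<bullet> b))"

definition std_gaussian :: "'a::euclidean_space measure" where
  "std_gaussian = density lborel (\<lambda>y. ennreal (std_gaussian_density y))"

lemma std_gaussian_density_eq:
  "std_gaussian_density (y::'a::euclidean_space) =
     (1 / sqrt (2 * pi)) ^ DIM('a) * exp (- (norm y)\<^sup>2 / 2)"
proof -
  have "(norm y)\<^sup>2 = (\<Sum>b\<in>Basis. (y \<bullet> b)\<^sup>2)"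
    unfolding power2_norm_eq_inner by (subst euclidean_inner) (simp add: power2_eq_square)
  then have "exp (- (norm y)\<^sup>2 / 2) = (\<Prod>b\<in>(Basis::'a set). exp (- (y \<bullet> b)\<^sup>2 / 2))"
    by (simp add: exp_sum[symmetric] sum_negf sum_divide_distrib)
  moreover have "std_gaussian_density y =
      (\<Prod>b\<in>(Basis::'a set). 1 / sqrt (2 * pi)) * (\<Prod>b\<in>(Basis::'a set). exp (- (y \<bullet> b)\<^sup>2 / 2))"
    by (simp only: std_gaussian_density_def std_normal_density_def prod.distrib)
  ultimately show ?thesis
    by (simp only: prod_constant)
qed

lemma std_gaussian_density_pos [simp]: "std_gaussian_density y > 0"
  by (simp add: std_gaussian_density_eq)

lemma borel_measurable_std_gaussian_density [measurable]:
  "std_gaussian_density \<in> borel_measurable borel"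
  unfolding std_gaussian_density_def by measurable

lemma std_gaussian_density_norm_cong:
  fixes x y :: "'a::euclidean_space"
  shows "norm x = norm y \<Longrightarrow> std_gaussian_density x = std_gaussian_density y"
  by (simp add: std_gaussian_density_eq)

lemma std_gaussian_density_less:
  fixes x y :: "'a::euclidean_space"
  assumes "norm x < norm y"
  shows "std_gaussian_density y < std_gaussian_density x"
proof -
  have "(norm x)\<^sup>2 < (norm y)\<^sup>2"
    using assms by (simp add: power_strict_mono)
  then show ?thesis
    by (simp add: std_gaussian_density_eq)
qed

lemma nn_integral_std_gaussian_density:
  "(\<integral>\<^sup>+y. ennreal (std_gaussian_density (y::'a::euclidean_space)) \<partial>lborel) = 1"
proof -
  interpret normal: prob_space "density lborel std_normal_density"
    by (rule prob_space_normal_density) simp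
  have "(\<integral>\<^sup>+y. ennreal (std_gaussian_density (y::'a)) \<partial>lborel)
      = (\<integral>\<^sup>+y. (\<Prod>b\<in>Basis. ennreal (std_normal_density ((y::'a) \<bullet> b))) \<partial>lborel)"
    by (simp add: std_gaussian_density_def prod_ennreal)
  also have "\<dots> = (\<Prod>b\<in>(Basis::'a set). \<integral>\<^sup>+x. ennreal (std_normal_density x) \<partial>lborel)"
    by (rule nn_integral_lborel_prod) auto
  also have "(\<integral>\<^sup>+x. ennreal (std_normal_density x) \<partial>lborel) = 1"
    using normal.emeasure_space_1 by (simp add: emeasure_density)
  finally show ?thesis
    by simp
qed

lemma sets_std_gaussian [simp, measurable_cong]: "sets std_gaussian = sets borel"
  by (simp add: std_gaussian_def)

lemma space_std_gaussian [simp]: "space std_gaussian = UNIV"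
  by (simp add: std_gaussian_def)

lemma emeasure_std_gaussian:
  "A \<in> sets borel \<Longrightarrow>
     emeasure std_gaussian A = (\<integral>\<^sup>+y. ennreal (std_gaussian_density y) * indicator A y \<partial>lborel)"
  by (simp add: std_gaussian_def emeasure_density)

interpretation std_gaussian: prob_space "std_gaussian :: 'a::euclidean_space measure"
  by (rule prob_spaceI) (simp add: emeasure_std_gaussian nn_integral_std_gaussian_density)

lemma distr_std_gaussian_linear_isometry:
  fixes U :: "'a::euclidean_space \<Rightarrow> 'a"
  assumes lin: "linear U" and isometry: "\<And>x. norm (U x) = norm x"
  shows "distr std_gaussian borel U = std_gaussian"
proof (rule measure_eqI)
  have U_measurable [measurable]: "U \<in> borel_measurable borel"
    using lin by (rule borel_measurable_linear)
  fix A :: "'a set"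
  assume "A \<in> sets (distr std_gaussian borel U)"
  then have A_borel [measurable]: "A \<in> sets borel"
    by simp
  have "emeasure (distr std_gaussian borel U) A = emeasure std_gaussian (U -` A)"
    by (subst emeasure_distr) auto
  also have "\<dots> = (\<integral>\<^sup>+y. ennreal (std_gaussian_density y) * indicator (U -` A) y \<partial>lborel)"
    by (rule emeasure_std_gaussian) (rule measurable_sets_borel[OF U_measurable A_borel])
  also have "\<dots> = (\<integral>\<^sup>+y. ennreal (std_gaussian_density (0 + U y)) * indicator A (0 + U y) \<partial>lborel)"
    by (simp add: std_gaussian_density_norm_cong[OF isometry] indicator_vimage[symmetric])
  also have "\<dots> = (\<integral>\<^sup>+y. ennreal (std_gaussian_density y) * indicator A y \<partial>lborel)"
    by (rule nn_integral_lborel_affine_isometry[OF lin isometry]) simp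
  also have "\<dots> = emeasure std_gaussian A"
    by (simp add: emeasure_std_gaussian)
  finally show "emeasure (distr std_gaussian borel U) A = emeasure std_gaussian A" .
qed simp

lemma emeasure_std_gaussian_pos:
  fixes c :: "'a::euclidean_space"
  assumes [measurable]: "S \<in> sets borel" and "r > 0" and "ball c r \<subseteq> S"
  shows "emeasure std_gaussian S > 0"
proof -
  have "\<not> (AE y in lborel. ennreal (std_gaussian_density y) * indicator S y = 0)"
    using assms(3) by (intro not_AE_lborel_ball[OF \<open>r > 0\<close>, of c])
      (auto simp: indicator_def ennreal_eq_0_iff linorder_not_le[THEN iffD2, OF std_gaussian_density_pos])
  then show ?thesis
    by (simp add: emeasure_std_gaussian nn_integral_0_iff_AE zero_less_iff_neq_zero)
qed

lemma null_sets_std_gaussian: "N \<in> null_sets lborel \<Longrightarrow> N \<in> null_sets std_gaussian"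
  using AE_not_in[of N lborel]
  by (auto simp: std_gaussian_def null_sets_density_iff elim!: eventually_mono)

lemma measure_std_gaussian_halfspace_0_ge_half:
  fixes u :: "'a::euclidean_space"
  shows "measure std_gaussian {y. u \<bullet> y \<le> 0} \<ge> 1/2"
proof -
  have "measure std_gaussian {y. u \<bullet> y \<ge> 0} = measure (distr std_gaussian borel uminus) {y. u \<bullet> y \<ge> 0}"
    by (simp add: distr_std_gaussian_linear_isometry linear_uminus)
  also have "\<dots> = measure std_gaussian {y. u \<bullet> y \<le> 0}"
    by (subst measure_distr) (auto simp: vimage_def)
  finally have symmetric: "measure std_gaussian {y. u \<bullet> y \<ge> 0} = measure std_gaussian {y. u \<bullet> y \<le> 0}" .
  have "{y. u \<bullet> y \<le> 0} \<union> {y. u \<bullet> y \<ge> 0} = UNIV"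
    by auto
  then have "1 = measure std_gaussian ({y. u \<bullet> y \<le> 0} \<union> {y. u \<bullet> y \<ge> 0})"
    using std_gaussian.prob_space by simp
  also have "\<dots> \<le> measure std_gaussian {y. u \<bullet> y \<le> 0} + measure std_gaussian {y. u \<bullet> y \<ge> 0}"
    by (rule measure_subadditive) auto
  finally show ?thesis
    using symmetric by simp
qed

lemma measure_std_gaussian_halfspace_gt_half:
  fixes u :: "'a::euclidean_space"
  assumes u: "u \<noteq> 0" and \<beta>: "\<beta> > 0"
  shows "measure std_gaussian {y. u \<bullet> y \<le> \<beta>} > 1/2"
proof -
  define z where "z = (\<beta> / 2 / (u \<bullet> u)) *\<^sub>R u"
  define e where "e = \<beta> / 2 / norm u"
  have "e > 0"
    using u \<beta> by (simp add: e_def)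
  have "ball z e \<subseteq> {y. 0 < u \<bullet> y \<and> u \<bullet> y \<le> \<beta>}"
  proof
    fix y
    assume "y \<in> ball z e"
    then have "norm u * norm (y - z) < norm u * e"
      using u by (simp add: dist_norm norm_minus_commute)
    then have "\<bar>u \<bullet> (y - z)\<bar> < \<beta> / 2"
      using Cauchy_Schwarz_ineq2[of u "y - z"] u by (simp add: e_def)
    moreover have "u \<bullet> z = \<beta> / 2"
      using u by (simp add: z_def)
    ultimately show "y \<in> {y. 0 < u \<bullet> y \<and> u \<bullet> y \<le> \<beta>}"
      by (auto simp: inner_diff_right)
  qed
  then have "emeasure std_gaussian {y. 0 < u \<bullet> y \<and> u \<bullet> y \<le> \<beta>} > 0"
    using \<open>e > 0\<close> by (intro emeasure_std_gaussian_pos) auto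
  then have slab: "measure std_gaussian {y. 0 < u \<bullet> y \<and> u \<bullet> y \<le> \<beta>} > 0"
    by (simp add: std_gaussian.emeasure_eq_measure)
  have "{y. u \<bullet> y \<le> \<beta>} = {y. u \<bullet> y \<le> 0} \<union> {y. 0 < u \<bullet> y \<and> u \<bullet> y \<le> \<beta>}"
    using \<beta> by auto
  then have "measure std_gaussian {y. u \<bullet> y \<le> \<beta>}
      = measure std_gaussian {y. u \<bullet> y \<le> 0} + measure std_gaussian {y. 0 < u \<bullet> y \<and> u \<bullet> y \<le> \<beta>}"
    by (simp add: std_gaussian.finite_measure_Union disjoint_iff)
  then show ?thesis
    using measure_std_gaussian_halfspace_0_ge_half[of u] slab by simp
qed

lemma std_gaussian_bisecting_halfspace:
  fixes u :: "'a::euclidean_space"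
  assumes u: "u \<noteq> 0" and half: "measure std_gaussian {y. u \<bullet> y \<le> \<beta>} = 1/2"
  shows "\<beta> = 0"
proof (rule ccontr)
  assume "\<beta> \<noteq> 0"
  then consider "\<beta> > 0" | "\<beta> < 0"
    by linarith
  then show False
  proof cases
    case 1
    with measure_std_gaussian_halfspace_gt_half[OF u] half show False
      by fastforce
  next
    case 2
    have "1/2 < measure std_gaussian {y. (-u) \<bullet> y \<le> -\<beta>/2}"
      using u 2 by (intro measure_std_gaussian_halfspace_gt_half) auto
    also have "\<dots> \<le> measure std_gaussian (UNIV - {y. u \<bullet> y \<le> \<beta>})"
      using 2 by (intro std_gaussian.finite_measure_mono) auto
    also have "\<dots> = 1/2"
      using half std_gaussian.prob_compl[of "{y. u \<bullet> y \<le> \<beta>}"] by simp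
    finally show False
      by simp
  qed
qed

section \<open>Gaussian measure of balls\<close>

definition householder :: "'a::real_inner \<Rightarrow> 'a \<Rightarrow> 'a" where
  "householder n y = y - (2 * (y \<bullet> n) / (n \<bullet> n)) *\<^sub>R n"

lemma linear_householder: "linear (householder n)"
  by (rule linearI) (simp_all add: householder_def inner_add_left algebra_simps add_divide_distrib)

lemma norm_householder: "norm (householder n y) = norm y"
proof (cases "n = 0")
  case False
  then have "householder n y \<bullet> householder n y = y \<bullet> y"
    by (simp add: householder_def inner_diff_left inner_diff_right inner_commute power2_eq_square
        field_simps)
  then show ?thesis
    by (simp add: norm_eq_sqrt_inner)
qed (simp add: householder_def) \<comment> \<open>division by 0 makes householder 0 the identity\<close>

lemma householder_scaleR_self: "n \<noteq> 0 \<Longrightarrow> householder n (c *\<^sub>R n) = - (c *\<^sub>R n)"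
  by (simp add: householder_def flip: scaleR_diff_left)

definition reflect_bisector :: "'a::real_inner \<Rightarrow> 'a \<Rightarrow> 'a \<Rightarrow> 'a" where
  "reflect_bisector w w' y = midpoint w w' + householder (w' - w) (y - midpoint w w')"

lemma reflect_bisector_affine:
  "reflect_bisector w w' y =
     (midpoint w w' - householder (w' - w) (midpoint w w')) + householder (w' - w) y"
  by (simp add: reflect_bisector_def linear_diff[OF linear_householder])

lemma dist_reflect_bisector:
  "dist (reflect_bisector w w' y) (reflect_bisector w w' z) = dist y z"
  by (simp add: reflect_bisector_def dist_norm linear_diff[OF linear_householder, symmetric]
      norm_householder)

lemma reflect_bisector_swap:
  assumes "w \<noteq> w'"
  shows "reflect_bisector w w' w = w'" and "reflect_bisector w w' w' = w"
proof -
  define h where "h = (1/2) *\<^sub>R (w' - w)"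
  have "w = midpoint w w' - h" and "w' = midpoint w w' + h"
    by (simp_all add: h_def midpoint_def algebra_simps) (metis scaleR_half_double scaleR_add_right)+
  moreover have "householder (w' - w) h = - h" and "householder (w' - w) (- h) = h"
    using assms householder_scaleR_self[of "w' - w" "1/2"] householder_scaleR_self[of "w' - w" "- 1/2"]
    by (simp_all add: h_def)
  ultimately show "reflect_bisector w w' w = w'" and "reflect_bisector w w' w' = w"
    by (metis add_diff_cancel_left' diff_conv_add_uminus reflect_bisector_def)+
qed

lemma norm_less_reflect_bisector:
  fixes w w' y :: "'a::real_inner"
  assumes "norm w < norm w'" and "dist y w < dist y w'"
  shows "norm y < norm (reflect_bisector w w' y)"
proof -
  define n m v where "n = w' - w" and "m = midpoint w w'" and "v = y - m"
  have "n \<noteq> 0"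
    using assms(1) by (auto simp: n_def)
  then have "n \<bullet> n > 0"
    by simp
  have "m \<bullet> n = (w' \<bullet> w' - w \<bullet> w) / 2"
    by (simp add: m_def n_def midpoint_def inner_diff_right inner_add_left inner_commute algebra_simps)
  then have mn: "m \<bullet> n > 0"
    using assms(1) by (simp add: norm_lt)
  have "(y - w) \<bullet> (y - w) < (y - w') \<bullet> (y - w')"
    using assms(2) by (simp add: dist_norm norm_lt)
  then have vn: "v \<bullet> n < 0"
    by (simp add: v_def m_def n_def midpoint_def inner_diff_left inner_diff_right inner_add_left
        inner_add_right inner_commute algebra_simps)
  have "reflect_bisector w w' y \<bullet> reflect_bisector w w' y = y \<bullet> y - 4 * (v \<bullet> n) * (m \<bullet> n) / (n \<bullet> n)"
    using \<open>n \<bullet> n > 0\<close>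
    by (simp add: reflect_bisector_def householder_def flip: m_def n_def v_def)
      (simp add: v_def inner_diff_left inner_diff_right inner_add_left inner_add_right inner_commute
        field_simps power2_eq_square)
  moreover have "4 * (v \<bullet> n) * (m \<bullet> n) / (n \<bullet> n) < 0"
    using vn mn \<open>n \<bullet> n > 0\<close> by (simp add: divide_neg_pos mult_neg_pos)
  ultimately show ?thesis
    by (simp add: norm_lt)
qed

lemma ball_subset_cball_diff_cball:
  fixes w w' :: "'a::real_normed_vector"
  assumes "w \<noteq> w'" and "r > 0"
  obtains z e where "e > 0" and "ball z e \<subseteq> cball w r - cball w' r"
proof
  define \<delta> where "\<delta> = dist w w'"
  define e where "e = min r \<delta> / 3"
  define z where "z = w - ((r - e) / \<delta>) *\<^sub>R (w' - w)"
  have "\<delta> > 0" and "e > 0" and "3 * e \<le> \<delta>" and "e < r"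
    using assms by (auto simp: \<delta>_def e_def)
  have norm: "norm (w' - w) = \<delta>"
    by (simp add: \<delta>_def dist_norm norm_minus_commute)
  have "(r - e) / \<delta> > 0"
    using \<open>\<delta> > 0\<close> \<open>e < r\<close> by simp
  moreover have "w - z = ((r - e) / \<delta>) *\<^sub>R (w' - w)" and "w' - z = (1 + (r - e) / \<delta>) *\<^sub>R (w' - w)"
    by (simp_all add: z_def algebra_simps)
  ultimately have dist_w: "dist w z = r - e" and dist_w': "dist w' z = \<delta> + (r - e)"
    using \<open>\<delta> > 0\<close> \<open>e < r\<close> by (simp_all add: dist_norm norm distrib_right)
  show "ball z e \<subseteq> cball w r - cball w' r"
  proof
    fix y
    assume "y \<in> ball z e"
    then have "dist z y < e"
      by simp
    then show "y \<in> cball w r - cball w' r"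
      using dist_triangle[of w y z] dist_triangle[of w' z y] dist_w dist_w' \<open>3 * e \<le> \<delta>\<close> \<open>e > 0\<close>
      by (simp add: dist_commute)
  qed
  show "e > 0"
    by fact
qed

lemma emeasure_std_gaussian_reflect_bisector:
  fixes w w' :: "'a::euclidean_space"
  assumes [measurable]: "A \<in> sets borel"
  shows "emeasure std_gaussian A = (\<integral>\<^sup>+y. ennreal (std_gaussian_density (reflect_bisector w w' y))
      * indicator A (reflect_bisector w w' y) \<partial>lborel)"
  unfolding reflect_bisector_affine emeasure_std_gaussian[OF assms]
  by (rule nn_integral_lborel_affine_isometry[symmetric]) (simp_all add: linear_householder norm_householder)

lemma borel_measurable_reflect_bisector [measurable]:
  "reflect_bisector w w' \<in> borel_measurable (borel :: 'a::euclidean_space measure)"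
proof -
  have [measurable]: "householder (w' - w) \<in> borel_measurable (borel :: 'a measure)"
    using linear_householder by (rule borel_measurable_linear)
  show ?thesis
    unfolding reflect_bisector_affine[abs_def] by measurable
qed

text \<open>The reflection in the bisector of w and w' swaps the two balls and moves every point of
  cball w r - cball w' r farther from the origin, where the density is smaller.\<close>

lemma emeasure_std_gaussian_cball_diff_less:
  fixes w w' :: "'a::euclidean_space"
  assumes r: "r > 0" and less: "norm w < norm w'"
  shows "emeasure std_gaussian (cball w' r - cball w r) < emeasure std_gaussian (cball w r - cball w' r)"
proof -
  have "w \<noteq> w'"
    using less by auto
  define \<sigma> where "\<sigma> = reflect_bisector w w'"
  define D where "D = cball w r - cball w' r"
  have [measurable]: "D \<in> sets borel" "\<sigma> \<in> borel_measurable borel"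
    by (simp_all add: D_def \<sigma>_def)
  have \<sigma>_D: "\<sigma> y \<in> cball w' r - cball w r \<longleftrightarrow> y \<in> D" for y
  proof -
    have "dist (\<sigma> y) w' = dist y w" and "dist (\<sigma> y) w = dist y w'"
      using dist_reflect_bisector[of w w' y w] dist_reflect_bisector[of w w' y w']
      by (simp_all add: \<sigma>_def reflect_bisector_swap[OF \<open>w \<noteq> w'\<close>])
    then show ?thesis
      by (auto simp: D_def dist_commute)
  qed
  have "emeasure std_gaussian (cball w' r - cball w r) = (\<integral>\<^sup>+y. ennreal (std_gaussian_density (\<sigma> y))
      * indicator (cball w' r - cball w r) (\<sigma> y) \<partial>lborel)"
    unfolding \<sigma>_def by (rule emeasure_std_gaussian_reflect_bisector) simp
  also have "\<dots> = (\<integral>\<^sup>+y. ennreal (std_gaussian_density (\<sigma> y)) * indicator D y \<partial>lborel)"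
    by (intro nn_integral_cong) (simp only: indicator_def \<sigma>_D)
  finally have D'_eq: "emeasure std_gaussian (cball w' r - cball w r)
      = (\<integral>\<^sup>+y. ennreal (std_gaussian_density (\<sigma> y)) * indicator D y \<partial>lborel)" .
  have density_less: "std_gaussian_density (\<sigma> y) < std_gaussian_density y" if "y \<in> D" for y
    using that less
    by (intro std_gaussian_density_less) (auto simp: \<sigma>_def D_def dist_commute intro: norm_less_reflect_bisector)
  obtain z e where "e > 0" and "ball z e \<subseteq> D"
    using ball_subset_cball_diff_cball[OF \<open>w \<noteq> w'\<close> r] unfolding D_def by blast
  have "(\<integral>\<^sup>+y. ennreal (std_gaussian_density (\<sigma> y)) * indicator D y \<partial>lborel)
      < (\<integral>\<^sup>+y. ennreal (std_gaussian_density y) * indicator D y \<partial>lborel)"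
  proof (rule nn_integral_less)
    show "(\<integral>\<^sup>+y. ennreal (std_gaussian_density (\<sigma> y)) * indicator D y \<partial>lborel) \<noteq> \<infinity>"
      using D'_eq[symmetric] by (simp add: std_gaussian.emeasure_eq_measure)
    show "AE y in lborel. ennreal (std_gaussian_density (\<sigma> y)) * indicator D y
        \<le> ennreal (std_gaussian_density y) * indicator D y"
      using density_less by (intro AE_I2) (simp add: indicator_def less_imp_le)
    show "\<not> (AE y in lborel. ennreal (std_gaussian_density y) * indicator D y
        \<le> ennreal (std_gaussian_density (\<sigma> y)) * indicator D y)"
      using density_less \<open>ball z e \<subseteq> D\<close>
      by (intro not_AE_lborel_ball[OF \<open>e > 0\<close>, of z]) (auto simp: indicator_def not_le intro!: ennreal_lessI)
  qed simp_all
  then show ?thesis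
    unfolding D'_eq by (simp add: D_def emeasure_std_gaussian)
qed

lemma measure_std_gaussian_cball_less:
  fixes w w' :: "'a::euclidean_space"
  assumes "r > 0" and "norm w < norm w'"
  shows "measure std_gaussian (cball w' r) < measure std_gaussian (cball w r)"
proof -
  let ?\<gamma> = "measure (std_gaussian :: 'a measure)"
  have "?\<gamma> (cball w' r - cball w r) < ?\<gamma> (cball w r - cball w' r)"
    using emeasure_std_gaussian_cball_diff_less[OF assms]
    by (simp add: std_gaussian.emeasure_eq_measure ennreal_less_iff)
  moreover have "?\<gamma> (cball w r) = ?\<gamma> (cball w r \<inter> cball w' r) + ?\<gamma> (cball w r - cball w' r)"
    and "?\<gamma> (cball w' r) = ?\<gamma> (cball w r \<inter> cball w' r) + ?\<gamma> (cball w' r - cball w r)"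
    by (subst std_gaussian.finite_measure_Union[symmetric]; auto intro!: arg_cong[where f = ?\<gamma>])+
  ultimately show ?thesis
    by simp
qed

section \<open>Gaussians on subspaces\<close>

lemma closest_point_in_subspace:
  fixes L :: "'a::euclidean_space set"
  shows "subspace L \<Longrightarrow> closest_point L x \<in> L"
  by (intro closest_point_in_set closed_subspace) (auto dest: subspace_0)

lemma inner_closest_point_subspace:
  fixes L :: "'a::euclidean_space set"
  assumes L: "subspace L" and a: "a \<in> L"
  shows "a \<bullet> closest_point L x = a \<bullet> x"
proof -
  let ?p = "closest_point L x"
  have "convex L" "closed L"
    using L by (auto simp: subspace_imp_convex closed_subspace)
  moreover have "?p + a \<in> L" "?p - a \<in> L"
    using L a closest_point_in_subspace[OF L] by (auto intro: subspace_add subspace_diff)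
  ultimately have "(x - ?p) \<bullet> a \<le> 0" and "(x - ?p) \<bullet> - a \<le> 0"
    using closest_point_dot[of L "?p + a" x] closest_point_dot[of L "?p - a" x] by simp_all
  then show ?thesis
    by (simp add: inner_diff_left inner_diff_right inner_commute)
qed

definition subspace_isometry :: "'k::finite itself \<Rightarrow> (real^'n::finite) set \<Rightarrow> real^'k \<Rightarrow> real^'n" where
  "subspace_isometry K L =
     (SOME f :: real^'k \<Rightarrow> real^'n. linear f \<and> (\<forall>x. norm (f x) = norm x) \<and> range f = L)"

lemma lebesgue_on_subspace_eq: "lebesgue_on_subspace K L = distr lborel borel (subspace_isometry K L)"
  by (simp add: lebesgue_on_subspace_def subspace_isometry_def)

lemma subspace_isometry:
  fixes K :: "'k::finite itself" and L :: "(real^'n::finite) set"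
  assumes "k_subspace K L"
  shows linear_subspace_isometry: "linear (subspace_isometry K L)"
    and norm_subspace_isometry: "norm (subspace_isometry K L x) = norm x"
    and range_subspace_isometry: "range (subspace_isometry K L) = L"
proof -
  have "subspace L" and "dim (UNIV :: (real^'k) set) = dim L"
    using assms by (simp_all add: k_subspace_def)
  then have "\<exists>f :: real^'k \<Rightarrow> real^'n. linear f \<and> (\<forall>x. norm (f x) = norm x) \<and> range f = L"
    by (rule isometries_subspaces[OF subspace_UNIV]) auto
  then have "linear (subspace_isometry K L) \<and> (\<forall>x. norm (subspace_isometry K L x) = norm x) \<and>
      range (subspace_isometry K L) = L"
    unfolding subspace_isometry_def by (rule someI_ex)
  then show "linear (subspace_isometry K L)" and "norm (subspace_isometry K L x) = norm x"
    and "range (subspace_isometry K L) = L"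
    by auto
qed

definition gaussian_on_subspace ::
    "'k::finite itself \<Rightarrow> real^'n \<Rightarrow> (real^'n::finite) set \<Rightarrow> (real^'n) measure" where
  "gaussian_on_subspace K p L =
     distr (std_gaussian :: (real^'k) measure) borel (\<lambda>y. closest_point L p + subspace_isometry K L y)"

lemma measure_gaussian_on_subspace:
  fixes K :: "'k::finite itself" and L :: "(real^'n::finite) set"
  assumes "k_subspace K L" and "H \<in> sets borel"
  shows "measure (gaussian_on_subspace K p L) H =
    measure (std_gaussian :: (real^'k) measure) ((\<lambda>y. closest_point L p + subspace_isometry K L y) -` H)"
proof -
  have "subspace_isometry K L \<in> borel_measurable borel"
    using assms(1) by (intro borel_measurable_linear linear_subspace_isometry)
  then show ?thesis
    unfolding gaussian_on_subspace_def using assms(2) by (subst measure_distr) auto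
qed

lemma absolutely_continuous_gaussian_on_subspace:
  fixes K :: "'k::finite itself" and L :: "(real^'n::finite) set"
  assumes kL: "k_subspace K L"
  shows "absolutely_continuous (lebesgue_on_subspace K L) (gaussian_on_subspace K p L)"
  unfolding absolutely_continuous_def lebesgue_on_subspace_eq
proof
  let ?F = "subspace_isometry K L" and ?c = "closest_point L p"
  have [measurable]: "?F \<in> borel_measurable borel"
    using kL by (intro borel_measurable_linear linear_subspace_isometry)
  have "?c \<in> L"
    using kL by (simp add: k_subspace_def closest_point_in_subspace)
  then obtain v where v: "?F v = ?c"
    using range_subspace_isometry[OF kL] by (metis rangeE)
  fix N
  assume "N \<in> null_sets (distr lborel borel ?F)"
  then have [measurable]: "N \<in> sets borel" and null: "?F -` N \<in> null_sets lborel"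
    by (auto simp: null_sets_distr_iff)
  from null have "{y. y - (- v) \<in> ?F -` N} \<in> null_sets lborel"
    by (rule null_sets_translation)
  moreover have "{y. y - (- v) \<in> ?F -` N} = (\<lambda>y. ?c + ?F y) -` N"
    using v kL by (auto simp: linear_add[OF linear_subspace_isometry] add.commute)
  ultimately show "N \<in> null_sets (gaussian_on_subspace K p L)"
    unfolding gaussian_on_subspace_def by (auto simp: null_sets_distr_iff intro: null_sets_std_gaussian)
qed

lemma mass_distribution_gaussian_on_subspace:
  fixes K :: "'k::finite itself" and L :: "(real^'n::finite) set"
  assumes kL: "k_subspace K L"
  shows "mass_distribution K L (gaussian_on_subspace K p L)"
proof -
  let ?F = "subspace_isometry K L" and ?c = "closest_point L p"
  have L: "subspace L"
    using kL by (simp add: k_subspace_def)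
  have [measurable]: "?F \<in> borel_measurable borel"
    using kL by (intro borel_measurable_linear linear_subspace_isometry)
  have "(\<lambda>y. ?c + ?F y) -` (UNIV - L) = {}"
    using range_subspace_isometry[OF kL] L closest_point_in_subspace[OF L] by (auto intro: subspace_add)
  then have "emeasure (gaussian_on_subspace K p L) (UNIV - L) = 0"
    unfolding gaussian_on_subspace_def using closed_subspace[OF L] by (subst emeasure_distr) auto
  moreover have "prob_space (gaussian_on_subspace K p L)"
    unfolding gaussian_on_subspace_def by (rule std_gaussian.prob_space_distr) simp
  ultimately show ?thesis
    using absolutely_continuous_gaussian_on_subspace[OF kL]
    unfolding mass_distribution_def gaussian_on_subspace_def by simp
qed

lemma LIMSEQ_by_subsubsequences:
  fixes X :: "nat \<Rightarrow> 'a::metric_space"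
  assumes "\<And>r :: nat \<Rightarrow> nat. strict_mono r \<Longrightarrow> \<exists>s :: nat \<Rightarrow> nat. strict_mono s \<and> (X \<circ> r \<circ> s) \<longlonglongrightarrow> L"
  shows "X \<longlonglongrightarrow> L"
proof (rule ccontr)
  assume "\<not> X \<longlonglongrightarrow> L"
  then obtain \<epsilon> where "\<epsilon> > 0" and "infinite {n. \<not> dist (X n) L < \<epsilon>}"
    by (auto simp: tendsto_iff not_eventually INFM_iff_infinite cofinite_eq_sequentially[symmetric])
  then obtain r :: "nat \<Rightarrow> nat" where "strict_mono r" and far: "\<forall>n. r n \<in> {n. \<not> dist (X n) L < \<epsilon>}"
    using infinite_enumerate by blast
  then obtain s where "(X \<circ> r \<circ> s) \<longlonglongrightarrow> L"
    using assms[OF \<open>strict_mono r\<close>] by blast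
  then show False
    using far \<open>\<epsilon> > 0\<close> by (auto dest!: tendstoD)
qed

lemma linear_isometries_convergent_subseq:
  fixes F :: "nat \<Rightarrow> real^'k::finite \<Rightarrow> 'a::euclidean_space"
  assumes lin: "\<And>i. linear (F i)" and isometry: "\<And>i x. norm (F i x) = norm x"
  obtains s G where "strict_mono s" and "linear G" and "\<And>x. norm (G x) = norm x"
    and "\<And>x. (\<lambda>i. F (s i) x) \<longlonglongrightarrow> G x"
proof -
  define V where "V i = (\<chi> j. F i (axis j 1))" for i
  have "norm (V i) \<le> (\<Sum>j\<in>UNIV. norm (V i $ j))" for i
    unfolding norm_vec_def by (rule L2_set_le_sum) simp
  then have "norm (V i) \<le> real CARD('k)" for i
    by (simp add: V_def isometry)
  then have "bounded (range V)"
    by (auto simp: bounded_iff)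
  then obtain l s where s: "strict_mono s" and V_lim: "(V \<circ> s) \<longlonglongrightarrow> l"
    using bounded_imp_convergent_subsequence by blast
  define G where "G x = (\<Sum>j\<in>UNIV. x $ j *\<^sub>R l $ j)" for x :: "real^'k"
  have F_expand: "F i x = (\<Sum>j\<in>UNIV. x $ j *\<^sub>R V i $ j)" for i x
  proof -
    have "F i x = F i (\<Sum>j\<in>UNIV. x $ j *\<^sub>R axis j 1)"
      using basis_expansion[of x] by (simp add: scalar_mult_eq_scaleR)
    then show ?thesis
      using lin by (simp add: V_def linear_sum linear_scale)
  qed
  have G_lim: "(\<lambda>i. F (s i) x) \<longlonglongrightarrow> G x" for x
  proof -
    have components: "(\<lambda>i. V (s i) $ j) \<longlonglongrightarrow> l $ j" for j
      using V_lim by (intro tendsto_vec_nth) (simp add: o_def)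
    show ?thesis
      unfolding F_expand G_def by (intro tendsto_sum tendsto_scaleR tendsto_const components)
  qed
  have "linear G"
    by (rule linearI) (simp_all add: G_def scaleR_add_left sum.distrib scaleR_sum_right)
  moreover have "norm (G x) = norm x" for x
    using tendsto_norm[OF G_lim[of x]] by (simp add: isometry LIMSEQ_unique)
  ultimately show ?thesis
    using that s G_lim by blast
qed

lemma grass_tendsto_subseq: "grass_tendsto Ls L \<Longrightarrow> strict_mono s \<Longrightarrow> grass_tendsto (Ls \<circ> s) L"
  unfolding grass_tendsto_def by (auto intro: LIMSEQ_subseq_LIMSEQ[unfolded o_def])

lemma grass_tendsto_limit_in:
  assumes subspaces: "\<And>i. subspace (Ls i)" "subspace L" and "grass_tendsto Ls L"
    and x: "\<And>i. x i \<in> Ls i" and "x \<longlonglongrightarrow> z"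
  shows "z \<in> L"
proof -
  let ?P = "\<lambda>i. closest_point (Ls i)"
  have "(\<lambda>i. x i - ?P i z) \<longlonglongrightarrow> 0"
  proof (rule Lim_null_comparison)
    have "dist (?P i (x i)) (?P i z) \<le> dist (x i) z" for i
      using subspaces by (intro closest_point_lipschitz)
        (auto simp: subspace_imp_convex closed_subspace dest: subspace_0)
    then show "\<forall>\<^sub>F i in sequentially. norm (x i - ?P i z) \<le> dist (x i) z"
      using x by (simp add: closest_point_self dist_norm)
    show "(\<lambda>i. dist (x i) z) \<longlonglongrightarrow> 0"
      using \<open>x \<longlonglongrightarrow> z\<close> by (simp add: tendsto_dist_iff[symmetric])
  qed
  moreover have "(\<lambda>i. ?P i z) \<longlonglongrightarrow> closest_point L z"
    using \<open>grass_tendsto Ls L\<close> by (simp add: grass_tendsto_def)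
  ultimately have "x \<longlonglongrightarrow> closest_point L z"
    using tendsto_add by fastforce
  then have "closest_point L z = z"
    using \<open>x \<longlonglongrightarrow> z\<close> by (rule LIMSEQ_unique)
  then show ?thesis
    using closest_point_in_subspace[OF subspaces(2), of z] by simp
qed

text \<open>Two isometric parametrisations of the same subspace differ by an orthogonal map,
  which the Gaussian does not see.\<close>

lemma integral_std_gaussian_isometry_range:
  fixes F G :: "'b::euclidean_space \<Rightarrow> 'a::euclidean_space" and f :: "'a \<Rightarrow> real"
  assumes lin: "linear F" "linear G" and isometry: "\<And>x. norm (F x) = norm x" "\<And>x. norm (G x) = norm x"
    and range: "range F \<subseteq> range G" and [measurable]: "f \<in> borel_measurable borel"
  shows "(\<integral>y. f (F y) \<partial>std_gaussian) = (\<integral>y. f (G y) \<partial>std_gaussian)"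
proof -
  have "inj G"
    using lin(2) isometry(2) by (metis linear_injective_0 norm_eq_zero)
  then obtain h where "linear h" and h: "h \<circ> G = id"
    using linear_injective_left_inverse[OF lin(2)] by blast
  define U where "U = h \<circ> F"
  have GU: "G (U y) = F y" for y
  proof -
    obtain z where "F y = G z"
      using range by blast
    then show ?thesis
      using fun_cong[OF h, of z] by (simp add: U_def)
  qed
  have "linear U"
    unfolding U_def using lin(1) \<open>linear h\<close> by (rule linear_compose)
  moreover have "norm (U y) = norm y" for y
    using isometry GU by metis
  moreover have [measurable]: "U \<in> borel_measurable borel" "G \<in> borel_measurable borel"
    using \<open>linear U\<close> lin(2) by (simp_all add: borel_measurable_linear)
  ultimately have "(\<integral>y. f (G y) \<partial>std_gaussian) = (\<integral>y. f (G y) \<partial>distr std_gaussian borel U)"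
    by (simp add: distr_std_gaussian_linear_isometry)
  also have "\<dots> = (\<integral>y. f (F y) \<partial>std_gaussian)"
    by (subst integral_distr) (simp_all add: GU)
  finally show ?thesis ..
qed

lemma integral_gaussian_on_subspace:
  fixes K :: "'k::finite itself" and L :: "(real^'n::finite) set" and g :: "real^'n \<Rightarrow> real"
  assumes "k_subspace K L" and [measurable]: "g \<in> borel_measurable borel"
  shows "(\<integral>x. g x \<partial>gaussian_on_subspace K p L) =
    (\<integral>y. g (closest_point L p + subspace_isometry K L y) \<partial>(std_gaussian :: (real^'k) measure))"
proof -
  have [measurable]: "subspace_isometry K L \<in> borel_measurable borel"
    using assms(1) by (intro borel_measurable_linear linear_subspace_isometry)
  show ?thesis
    unfolding gaussian_on_subspace_def by (rule integral_distr) auto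
qed

lemma subspace_isometries_convergent_subseq:
  fixes K :: "'k::finite itself" and L :: "(real^'n::finite) set"
  assumes kLs: "\<And>i. k_subspace K (Ls i)" and kL: "k_subspace K L" and lim: "grass_tendsto Ls L"
  obtains s G where "strict_mono s" and "linear G" and "\<And>x. norm (G x) = norm x" and "range G \<subseteq> L"
    and "\<And>x. (\<lambda>i. subspace_isometry K (Ls (s i)) x) \<longlonglongrightarrow> G x"
proof -
  obtain s G where "strict_mono s" and "linear G" and "\<And>x. norm (G x) = norm x"
    and G_lim: "\<And>x. (\<lambda>i. subspace_isometry K (Ls (s i)) x) \<longlonglongrightarrow> G x"
    using linear_isometries_convergent_subseq[of "\<lambda>i. subspace_isometry K (Ls i)"] kLs
    by (metis linear_subspace_isometry norm_subspace_isometry)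
  moreover have "G x \<in> L" for x
  proof (rule grass_tendsto_limit_in)
    show "grass_tendsto (Ls \<circ> s) L"
      using lim \<open>strict_mono s\<close> by (rule grass_tendsto_subseq)
    show "subspace_isometry K (Ls (s i)) x \<in> (Ls \<circ> s) i" for i
      using range_subspace_isometry[OF kLs] by auto
  qed (use kLs kL G_lim in \<open>auto simp: k_subspace_def\<close>)
  ultimately show ?thesis
    using that by blast
qed

text \<open>Along a subsequence on which the chosen isometries converge, the limit is an isometry onto L,
  and dominated convergence applies.\<close>

lemma gaussian_on_subspace_continuous:
  fixes K :: "'k::finite itself" and L :: "(real^'n::finite) set" and g :: "real^'n \<Rightarrow> real"
  assumes kLs: "\<And>i. k_subspace K (Ls i)" and kL: "k_subspace K L" and lim: "grass_tendsto Ls L"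
    and "continuous_on UNIV g" and "bounded (range g)"
  shows "(\<lambda>i. \<integral>x. g x \<partial>gaussian_on_subspace K p (Ls i)) \<longlonglongrightarrow> (\<integral>x. g x \<partial>gaussian_on_subspace K p L)"
proof (rule LIMSEQ_by_subsubsequences)
  have [measurable]: "g \<in> borel_measurable borel"
    using \<open>continuous_on UNIV g\<close> by (rule borel_measurable_continuous_onI)
  obtain B where B: "\<And>x. norm (g x) \<le> B"
    using \<open>bounded (range g)\<close> by (auto simp: bounded_iff)
  fix r :: "nat \<Rightarrow> nat"
  assume "strict_mono r"
  obtain s G where "strict_mono s" and "linear G" and G_isometry: "\<And>x. norm (G x) = norm x"
    and "range G \<subseteq> L" and G_lim: "\<And>x. (\<lambda>i. subspace_isometry K (Ls (r (s i))) x) \<longlonglongrightarrow> G x"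
  proof -
    have "k_subspace K ((Ls \<circ> r) i)" for i
      using kLs by simp
    from subspace_isometries_convergent_subseq[OF this kL grass_tendsto_subseq[OF lim \<open>strict_mono r\<close>]]
    show ?thesis
      unfolding o_def using that by blast
  qed
  define F where "F i = subspace_isometry K (Ls (r (s i)))" for i
  define c where "c i = closest_point (Ls (r (s i))) p" for i
  have [measurable]: "G \<in> borel_measurable borel" "F i \<in> borel_measurable borel" for i
    using \<open>linear G\<close> kLs by (simp_all add: F_def borel_measurable_linear linear_subspace_isometry)
  have F_lim: "(\<lambda>i. F i x) \<longlonglongrightarrow> G x" for x
    using G_lim by (simp add: F_def)
  have "(\<lambda>i. c i) \<longlonglongrightarrow> closest_point L p"
    using lim LIMSEQ_subseq_LIMSEQ[OF _ strict_mono_o[OF \<open>strict_mono r\<close> \<open>strict_mono s\<close>],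
        of "\<lambda>i. closest_point (Ls i) p"]
    by (simp add: grass_tendsto_def c_def o_def)
  then have "(\<lambda>i. \<integral>y. g (c i + F i y) \<partial>std_gaussian) \<longlonglongrightarrow> (\<integral>y. g (closest_point L p + G y) \<partial>std_gaussian)"
    using \<open>continuous_on UNIV g\<close> F_lim B
    by (intro integral_dominated_convergence[where w="\<lambda>_. B"] AE_I2
        continuous_on_tendsto_compose[of UNIV g] tendsto_add) auto
  also have "(\<integral>y. g (closest_point L p + G y) \<partial>std_gaussian)
      = (\<integral>y. g (closest_point L p + subspace_isometry K L y) \<partial>std_gaussian)"
    using \<open>linear G\<close> G_isometry kL \<open>range G \<subseteq> L\<close>
    by (intro integral_std_gaussian_isometry_range)
      (auto simp: linear_subspace_isometry norm_subspace_isometry range_subspace_isometry)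
  finally show "\<exists>s. strict_mono s \<and> ((\<lambda>i. \<integral>x. g x \<partial>gaussian_on_subspace K p (Ls i)) \<circ> r \<circ> s)
      \<longlonglongrightarrow> (\<integral>x. g x \<partial>gaussian_on_subspace K p L)"
    using \<open>strict_mono s\<close> kLs kL by (auto simp: o_def F_def c_def integral_gaussian_on_subspace)
qed

lemma mass_assignment_gaussian_on_subspace: "mass_assignment K (gaussian_on_subspace K p)"
  unfolding mass_assignment_def
  using mass_distribution_gaussian_on_subspace gaussian_on_subspace_continuous by blast

section \<open>Bisecting balls and half-spaces\<close>

lemma measure_gaussian_on_subspace_cball:
  fixes K :: "'k::finite itself" and L :: "(real^'n::finite) set"
  assumes kL: "k_subspace K L" and "c \<in> L"
  obtains w :: "real^'k" where "norm w = norm (c - closest_point L p)"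
    and "measure (gaussian_on_subspace K p L) (cball c r \<inter> L) = measure std_gaussian (cball w r)"
proof -
  let ?F = "subspace_isometry K L" and ?P = "closest_point L p"
  have L: "subspace L"
    using kL by (simp add: k_subspace_def)
  have "?P \<in> L"
    using L by (rule closest_point_in_subspace)
  then have "c - ?P \<in> L"
    using L \<open>c \<in> L\<close> by (simp add: subspace_diff)
  then obtain w where w: "?F w = c - ?P"
    using range_subspace_isometry[OF kL] by (metis rangeE)
  then have "norm w = norm (c - ?P)"
    using kL by (metis norm_subspace_isometry)
  have "(\<lambda>y. ?P + ?F y) -` (cball c r \<inter> L) = cball w r"
  proof (intro set_eqI)
    fix y
    have "c - (?P + ?F y) = ?F (w - y)"
      using kL w by (simp add: linear_diff[OF linear_subspace_isometry])
    then have "dist c (?P + ?F y) = dist w y"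
      using kL by (simp add: dist_norm norm_subspace_isometry)
    moreover have "?P + ?F y \<in> L"
      using L \<open>?P \<in> L\<close> range_subspace_isometry[OF kL] by (auto intro: subspace_add)
    ultimately show "y \<in> (\<lambda>y. ?P + ?F y) -` (cball c r \<inter> L) \<longleftrightarrow> y \<in> cball w r"
      by simp
  qed
  moreover have "cball c r \<inter> L \<in> sets borel"
    using L by (simp add: closed_Int closed_subspace)
  ultimately have "measure (gaussian_on_subspace K p L) (cball c r \<inter> L) = measure std_gaussian (cball w r)"
    using kL by (simp add: measure_gaussian_on_subspace)
  with \<open>norm w = norm (c - ?P)\<close> show ?thesis
    by (rule that)
qed

lemma measure_gaussian_on_subspace_halfspace:
  fixes K :: "'k::finite itself" and L :: "(real^'n::finite) set"
  assumes kL: "k_subspace K L" and "a \<in> L" and "a \<noteq> 0"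
  obtains u :: "real^'k" where "u \<noteq> 0"
    and "measure (gaussian_on_subspace K p L) {x \<in> L. a \<bullet> x \<le> b} = measure std_gaussian {y. u \<bullet> y \<le> b - a \<bullet> p}"
proof
  let ?F = "subspace_isometry K L" and ?P = "closest_point L p"
  have L: "subspace L"
    using kL by (simp add: k_subspace_def)
  define u where "u = adjoint ?F a"
  have u: "u \<bullet> y = a \<bullet> ?F y" for y
    using adjoint_works[of ?F y a] kL by (simp add: u_def inner_commute linear_subspace_isometry)
  obtain z where "a = ?F z"
    using range_subspace_isometry[OF kL] \<open>a \<in> L\<close> by blast
  then have "u \<bullet> z = a \<bullet> a"
    by (simp add: u)
  then show "u \<noteq> 0"
    using \<open>a \<noteq> 0\<close> by auto
  have "?P \<in> L"
    using L by (rule closest_point_in_subspace)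
  then have "?P + ?F y \<in> L" for y
    using L range_subspace_isometry[OF kL] by (auto intro: subspace_add)
  then have "(\<lambda>y. ?P + ?F y) -` {x \<in> L. a \<bullet> x \<le> b} = {y. u \<bullet> y \<le> b - a \<bullet> p}"
    using inner_closest_point_subspace[OF L \<open>a \<in> L\<close>] by (auto simp: inner_add_right u)
  moreover have "{x \<in> L. a \<bullet> x \<le> b} \<in> sets borel"
    using closed_subspace[OF L] by (simp add: Collect_conj_eq closed_Int closed_halfspace_le)
  ultimately show "measure (gaussian_on_subspace K p L) {x \<in> L. a \<bullet> x \<le> b} =
      measure std_gaussian {y. u \<bullet> y \<le> b - a \<bullet> p}"
    using kL by (simp add: measure_gaussian_on_subspace)
qed

lemma gaussian_on_subspace_bisecting_cball:
  fixes K :: "'k::finite itself" and L :: "(real^'n::finite) set"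
  assumes kL: "k_subspace K L" and "c \<in> L" and "r > 0"
    and "measure (gaussian_on_subspace K p L) (cball c r \<inter> L) = 1/2"
    and "measure (gaussian_on_subspace K q L) (cball c r \<inter> L) = 1/2"
  shows "norm (c - closest_point L p) = norm (c - closest_point L q)"
proof -
  obtain w :: "real^'k" where w: "norm w = norm (c - closest_point L p)"
    and "measure std_gaussian (cball w r) = 1/2"
    using measure_gaussian_on_subspace_cball[OF kL \<open>c \<in> L\<close>, of p r] assms(4) by metis
  moreover obtain w' :: "real^'k" where w': "norm w' = norm (c - closest_point L q)"
    and "measure std_gaussian (cball w' r) = 1/2"
    using measure_gaussian_on_subspace_cball[OF kL \<open>c \<in> L\<close>, of q r] assms(5) by metis
  ultimately have "norm w = norm w'"
    using measure_std_gaussian_cball_less[OF \<open>r > 0\<close>, of w w'] measure_std_gaussian_cball_less[OF \<open>r > 0\<close>, of w' w]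
    by (cases "norm w" "norm w'" rule: linorder_cases) auto
  then show ?thesis
    using w w' by simp
qed

lemma gaussian_on_subspace_bisecting_halfspace:
  fixes K :: "'k::finite itself" and L :: "(real^'n::finite) set"
  assumes kL: "k_subspace K L" and "a \<in> L" and "a \<noteq> 0"
    and "measure (gaussian_on_subspace K p L) {x \<in> L. a \<bullet> x \<le> b} = 1/2"
  shows "a \<bullet> p = b"
proof -
  obtain u :: "real^'k" where "u \<noteq> 0" and "measure std_gaussian {y. u \<bullet> y \<le> b - a \<bullet> p} = 1/2"
    using measure_gaussian_on_subspace_halfspace[OF assms(1-3), of p b] assms(4) by metis
  then show ?thesis
    using std_gaussian_bisecting_halfspace by fastforce
qed

lemma subspace_trivial_if_projections_equidistant:
  fixes L :: "(real^'n::finite) set"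
  assumes L: "subspace L" and "c \<in> L"
    and axis: "\<And>j. norm (c - closest_point L (axis j 1)) = norm c"
    and diagonal: "norm (c - closest_point L (- (\<Sum>j\<in>UNIV. axis j 1))) = norm c"
  shows "L \<subseteq> {0}"
proof -
  let ?P = "closest_point L"
  have square: "?P q \<bullet> ?P q = 2 * (c \<bullet> q)" if "norm (c - ?P q) = norm c" for q
  proof -
    have "(c - ?P q) \<bullet> (c - ?P q) = c \<bullet> c"
      using that by (simp add: norm_eq_sqrt_inner)
    then show ?thesis
      using inner_closest_point_subspace[OF L \<open>c \<in> L\<close>, of q]
      by (simp add: inner_diff_left inner_diff_right inner_commute algebra_simps)
  qed
  have "(\<Sum>j\<in>UNIV. ?P (axis j 1) \<bullet> ?P (axis j 1)) = 2 * (\<Sum>j\<in>UNIV. c $ j)"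
    using square[OF axis] by (simp add: inner_axis sum_distrib_left)
  also have "\<dots> = - (?P (- (\<Sum>j\<in>UNIV. axis j 1)) \<bullet> ?P (- (\<Sum>j\<in>UNIV. axis j 1)))"
    using square[OF diagonal] by (simp add: inner_sum_right inner_axis)
  also have "\<dots> \<le> 0"
    by simp
  finally have "(\<Sum>j\<in>UNIV. ?P (axis j 1) \<bullet> ?P (axis j (1::real))) = 0"
    using sum_nonneg[of UNIV "\<lambda>j. ?P (axis j 1) \<bullet> ?P (axis j (1::real))"] by simp
  then have "?P (axis j 1) = 0" for j
    by (subst (asm) sum_nonneg_eq_0_iff) auto
  then have "a $ j = 0" if "a \<in> L" for a j
    using inner_closest_point_subspace[OF L that, of "axis j 1"] by (simp add: inner_axis)
  then show ?thesis
    by (auto simp: vec_eq_iff)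
qed

lemma k_subspace_nontrivial: "k_subspace K L \<Longrightarrow> \<not> L \<subseteq> {0}"
  using dim_subset[of L "{0}"] by (auto simp: k_subspace_def)

lemma no_cball_bisects_gaussians_on_subspace:
  fixes K :: "'k::finite itself" and L :: "(real^'n::finite) set"
  assumes kL: "k_subspace K L" and "closed_ball_of L H"
    and origin: "measure (gaussian_on_subspace K 0 L) H = 1/2"
    and axis: "\<And>j. measure (gaussian_on_subspace K (axis j 1) L) H = 1/2"
    and diagonal: "measure (gaussian_on_subspace K (- (\<Sum>j\<in>UNIV. axis j 1)) L) H = 1/2"
  shows False
proof -
  obtain c r where "c \<in> L" and "r > 0" and H: "H = cball c r \<inter> L"
    using \<open>closed_ball_of L H\<close> by (auto simp: closed_ball_of_def)
  have L: "subspace L"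
    using kL by (simp add: k_subspace_def)
  have "closest_point L 0 = 0"
    using L by (simp add: closest_point_self subspace_0)
  then have "norm (c - closest_point L q) = norm c"
    if "measure (gaussian_on_subspace K q L) H = 1/2" for q
    using gaussian_on_subspace_bisecting_cball[OF kL \<open>c \<in> L\<close> \<open>r > 0\<close>, of q 0] that origin
    by (simp add: H)
  then have "L \<subseteq> {0}"
    using subspace_trivial_if_projections_equidistant[OF L \<open>c \<in> L\<close>] axis diagonal by blast
  with k_subspace_nontrivial[OF kL] show False ..
qed

lemma no_halfspace_bisects_gaussians_on_subspace:
  fixes K :: "'k::finite itself" and L :: "(real^'n::finite) set"
  assumes kL: "k_subspace K L" and "closed_halfspace_of L H"
    and origin: "measure (gaussian_on_subspace K 0 L) H = 1/2"
    and axis: "\<And>j. measure (gaussian_on_subspace K (axis j 1) L) H = 1/2"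
  shows False
proof -
  obtain a b where "a \<in> L" and "a \<noteq> 0" and H: "H = {x \<in> L. a \<bullet> x \<le> b}"
    using \<open>closed_halfspace_of L H\<close> by (auto simp: closed_halfspace_of_def)
  have "b = 0"
    using gaussian_on_subspace_bisecting_halfspace[OF kL \<open>a \<in> L\<close> \<open>a \<noteq> 0\<close>] origin H by fastforce
  then have "a $ j = 0" for j
    using gaussian_on_subspace_bisecting_halfspace[OF kL \<open>a \<in> L\<close> \<open>a \<noteq> 0\<close>] axis H
    by (fastforce simp: inner_axis)
  with \<open>a \<noteq> 0\<close> show False
    by (simp add: vec_eq_iff)
qed

lemma origin_axes_diagonal_enumeration:
  "\<exists>p :: nat \<Rightarrow> real^'n::finite. p 0 = 0 \<and> (\<forall>j. \<exists>i \<le> CARD('n) + 1. p i = axis j 1) \<and>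
     p (CARD('n) + 1) = - (\<Sum>j\<in>UNIV. axis j 1)"
proof -
  obtain e :: "nat \<Rightarrow> 'n" where e: "bij_betw e {1..CARD('n)} UNIV"
    using ex_bij_betw_nat_finite_1[of "UNIV :: 'n set"] by auto
  define p :: "nat \<Rightarrow> real^'n" where
    "p i = (if i = 0 then 0 else if i \<le> CARD('n) then axis (e i) 1 else - (\<Sum>j\<in>UNIV. axis j 1))" for i
  have "\<exists>i \<le> CARD('n) + 1. p i = axis j 1" for j
  proof -
    obtain i where "i \<in> {1..CARD('n)}" and "e i = j"
      using e by (metis bij_betw_iff_bijections UNIV_I)
    then show ?thesis
      by (intro exI[of _ i]) (auto simp: p_def)
  qed
  then show ?thesis
    by (intro exI[of _ p]) (simp add: p_def)
qed

theorem claim3p1: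
  assumes "CARD('k::finite) \<le> CARD('n::finite)"
  shows "\<exists>\<mu> :: nat \<Rightarrow> (real^'n) set \<Rightarrow> (real^'n) measure.
           (\<forall>i \<le> CARD('n) + 1. mass_assignment TYPE('k) (\<mu> i)) \<and>
           (\<forall>L. k_subspace TYPE('k) L \<longrightarrow>
              \<not> (\<exists>H. (closed_ball_of L H \<or> closed_halfspace_of L H) \<and>
                     (\<forall>i \<le> CARD('n) + 1. measure (\<mu> i L) H = 1 / 2)))"
proof -
  obtain p :: "nat \<Rightarrow> real^'n" where origin: "p 0 = 0" and axis: "\<And>j. \<exists>i \<le> CARD('n) + 1. p i = axis j 1"
    and diagonal: "p (CARD('n) + 1) = - (\<Sum>j\<in>UNIV. axis j 1)"
    using origin_axes_diagonal_enumeration by blast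
  show ?thesis
  proof (intro exI[of _ "\<lambda>i. gaussian_on_subspace TYPE('k) (p i)"] conjI allI impI notI)
    show "mass_assignment TYPE('k) (gaussian_on_subspace TYPE('k) (p i))" for i
      by (rule mass_assignment_gaussian_on_subspace)
    fix L :: "(real^'n) set"
    assume kL: "k_subspace TYPE('k) L" and "\<exists>H. (closed_ball_of L H \<or> closed_halfspace_of L H) \<and>
      (\<forall>i \<le> CARD('n) + 1. measure (gaussian_on_subspace TYPE('k) (p i) L) H = 1 / 2)"
    then obtain H where H: "closed_ball_of L H \<or> closed_halfspace_of L H"
      and half: "\<And>i. i \<le> CARD('n) + 1 \<Longrightarrow> measure (gaussian_on_subspace TYPE('k) (p i) L) H = 1 / 2"
      by blast
    have "measure (gaussian_on_subspace TYPE('k) (axis j 1) L) H = 1/2" for j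
      using half axis[of j] by metis
    with H half[of 0, unfolded origin] half[of "CARD('n) + 1", unfolded diagonal] show False
      using no_cball_bisects_gaussians_on_subspace[OF kL] no_halfspace_bisects_gaussians_on_subspace[OF kL]
      by auto
  qed
qed

end
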